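(* For every regex $R \in \mathrm{RE}^{\#}$ there exist regexes $A, B, E \in \mathrm{RE}_c$ (lookaround-free) such that $$R \equiv (?{<}{=}B)\cdot E\cdot (?{=}A),$$ i.e. for every span $\sigma$ (in every string), $\sigma \models R$ iff $\sigma \models (?{<}{=}B)\cdot E\cdot(?{=}A)$.
   Context: Let $\Sigma$ be a (possibly infinite) set of characters and $\Psi$ an effective Boolean algebra of predicates over $\Sigma$: each $\psi\in\Psi$ has a denotation $[\![\psi]\!]\subseteq\Sigma$, $\Psi$ contains $\bot,\top$ with $[\![\bot]\!]=\emptyset$, $[\![\top]\!]=\Sigma$, and is closed under $\vee,\wedge,\neg$ with the set-theoretic meaning. For a string $s\in\Sigma^*$, a location in $s$ is a pair $(s,i)$ with $0\le i\le |s|$; it is initial if $i=0$, final if $i=|s|$; for nonfinal $(s,i)$, $\mathrm{head}((s,i))=s_i$ (the $i$-th character, 0-indexed). A span in $s$ is a pair $\sigma=((s,i),(s,j))$ with $i\le j$; its width is $j-i$; write $\sigma.1=(s,i)$, $\sigma.2=(s,j)$. The class RE of regexes is given by the grammar $R ::= \psi \mid \varepsilon \mid R_1|R_2 \mid R_1\& R_2 \mid R_1\cdot R_2 \mid R^{\{m\}} \mid R^* \mid {\sim}R \mid (?{<}{=}R) \mid (?{<}!R) \mid (?{=}R) \mid (?!R)$ with $\psi\in\Psi$, $m\ge1$ an integer, and $R^{\{0\}}:=\varepsilon$. Semantics ($\sigma\models R$, all locations $x$ range over locations of the same string $s$, and pairs $(x,y)$ are required to be spans, i.e. $x$ not after $y$):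 $\sigma\models\varepsilon$ iff width $0$; $\sigma\models\psi$ iff width $1$ and $\mathrm{head}(\sigma.1)\in[\![\psi]\!]$; $|$, $\&$, ${\sim}$ are union, intersection and complement (over spans); $\sigma\models L\cdot R$ iff $\exists x:(\sigma.1,x)\models L$ and $(x,\sigma.2)\models R$; $\sigma\models R^{\{m\}}$ iff $\exists x:(\sigma.1,x)\models R$ and $(x,\sigma.2)\models R^{\{m-1\}}$; $\sigma\models R^*$ iff $\exists m\ge0:\sigma\models R^{\{m\}}$; $\sigma\models(?{=}R)$ iff width $0$ and $\exists x:(\sigma.1,x)\models R$; $\sigma\models(?!R)$ iff width $0$ and no such $x$ exists; $\sigma\models(?{<}{=}R)$ iff width $0$ and $\exists x:(x,\sigma.2)\models R$; $\sigma\models(?{<}!R)$ iff width $0$ and no such $x$ exists. For a location $x$, $x\models R$ means $(x,x)\models R$. $R\equiv S$ means the two regexes are matched by exactly the same spans (in all strings). Define $\backslash A := (?{<}!\top)$ (matches exactly at initial locations) and $\backslash z := (?!\top)$ (matches exactly at final locations), and $\_* := \top^*$. $\mathrm{RE}_c$ (lookaround-free regexes) is given by $E ::= \backslash A \mid \backslash z \mid \psi\mid\varepsilon\mid E_1|E_2\mid E_1\& E_2\mid E_1\cdot E_2\mid E^{\{m\}}\mid E^*\mid {\sim}E$. $\mathrm{RE}^{\#}$ is given by $R ::= E \mid R_1\& R_2 \mid (?{<}{=}E)\cdot R \mid (?{<}!E)\cdot R \mid R\cdot(?{=}E)\mid R\cdot(?!E)$ with $E\in\mathrm{RE}_c$.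 *)

theory Defs
  imports Main
begin

text \<open>Regexes over an abstract predicate type 'p (the Boolean algebra Psi),
  whose denotation is given by a function den :: 'p => 'c set.\<close>

datatype 'p rx =
    Pred 'p
  | Eps
  | Alt "'p rx" "'p rx"
  | Inter "'p rx" "'p rx"
  | Concat "'p rx" "'p rx"
  | Rep "'p rx" nat          (* R^{m}; Rep R 0 denotes epsilon *)
  | Star "'p rx"
  | Compl "'p rx"
  | LookBehind "'p rx"
  | NegLookBehind "'p rx"
  | LookAhead "'p rx"
  | NegLookAhead "'p rx"

fun pw :: "(nat \<Rightarrow> nat \<Rightarrow> bool) \<Rightarrow> nat \<Rightarrow> nat \<Rightarrow> nat \<Rightarrow> nat \<Rightarrow> bool" where
  "pw P len 0 i j = (i = j \<and> j \<le> len)"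
| "pw P len (Suc n) i j = (\<exists>x. i \<le> x \<and> x \<le> j \<and> P i x \<and> pw P len n x j)"

text \<open>matches den s R i j: the span ((s,i),(s,j)) matches R (only holds for
  spans, i.e. i <= j <= length s).\<close>
primrec matches :: "('p \<Rightarrow> 'c set) \<Rightarrow> 'c list \<Rightarrow> 'p rx \<Rightarrow> nat \<Rightarrow> nat \<Rightarrow> bool" where
  "matches den s (Pred p) i j = (j = Suc i \<and> j \<le> length s \<and> s ! i \<in> den p)"
| "matches den s Eps i j = (i = j \<and> j \<le> length s)"
| "matches den s (Alt R1 R2) i j = (matches den s R1 i j \<or> matches den s R2 i j)"
| "matches den s (Inter R1 R2) i j = (matches den s R1 i j \<and> matches den s R2 i j)"
| "matches den s (Concat R1 R2) i j =
     (\<exists>x. i \<le> x \<and> x \<le> j \<and> matches den s R1 i x \<and> matches den s R2 x j)"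
| "matches den s (Rep R m) i j = pw (matches den s R) (length s) m i j"
| "matches den s (Star R) i j = (\<exists>m. pw (matches den s R) (length s) m i j)"
| "matches den s (Compl R) i j = (i \<le> j \<and> j \<le> length s \<and> \<not> matches den s R i j)"
| "matches den s (LookBehind R) i j =
     (i = j \<and> j \<le> length s \<and> (\<exists>x. x \<le> j \<and> matches den s R x j))"
| "matches den s (NegLookBehind R) i j =
     (i = j \<and> j \<le> length s \<and> \<not> (\<exists>x. x \<le> j \<and> matches den s R x j))"
| "matches den s (LookAhead R) i j =
     (i = j \<and> j \<le> length s \<and> (\<exists>x. i \<le> x \<and> x \<le> length s \<and> matches den s R i x))"
| "matches den s (NegLookAhead R) i j =
     (i = j \<and> j \<le> length s \<and> \<not> (\<exists>x. i \<le> x \<and> x \<le> length s \<and> matches den s R i x))"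

definition bool_alg :: "('p \<Rightarrow> 'c set) \<Rightarrow> bool" where
  "bool_alg den \<longleftrightarrow> (\<exists>p. den p = {}) \<and> (\<exists>p. den p = UNIV) \<and>
     (\<forall>p q. \<exists>r. den r = den p \<union> den q) \<and>
     (\<forall>p q. \<exists>r. den r = den p \<inter> den q) \<and>
     (\<forall>p. \<exists>r. den r = - den p)"

text \<open>Lookaround-free regexes RE_c; \A = (?<!T) and \z = (?!T) for a top predicate T.\<close>
inductive_set REc :: "('p \<Rightarrow> 'c set) \<Rightarrow> 'p rx set" for den where
  begA: "den t = UNIV \<Longrightarrow> NegLookBehind (Pred t) \<in> REc den"
| endZ: "den t = UNIV \<Longrightarrow> NegLookAhead (Pred t) \<in> REc den"
| pred: "Pred p \<in> REc den"
| eps: "Eps \<in> REc den"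
| alt: "E1 \<in> REc den \<Longrightarrow> E2 \<in> REc den \<Longrightarrow> Alt E1 E2 \<in> REc den"
| inter: "E1 \<in> REc den \<Longrightarrow> E2 \<in> REc den \<Longrightarrow> Inter E1 E2 \<in> REc den"
| concat: "E1 \<in> REc den \<Longrightarrow> E2 \<in> REc den \<Longrightarrow> Concat E1 E2 \<in> REc den"
| rep: "E \<in> REc den \<Longrightarrow> m \<ge> 1 \<Longrightarrow> Rep E m \<in> REc den"
| star: "E \<in> REc den \<Longrightarrow> Star E \<in> REc den"
| compl: "E \<in> REc den \<Longrightarrow> Compl E \<in> REc den"

inductive_set REsharp :: "('p \<Rightarrow> 'c set) \<Rightarrow> 'p rx set" for den where
  base: "E \<in> REc den \<Longrightarrow> E \<in> REsharp den"
| inter: "R1 \<in> REsharp den \<Longrightarrow> R2 \<in> REsharp den \<Longrightarrow> Inter R1 R2 \<in> REsharp den"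
| lb: "E \<in> REc den \<Longrightarrow> R \<in> REsharp den \<Longrightarrow> Concat (LookBehind E) R \<in> REsharp den"
| nlb: "E \<in> REc den \<Longrightarrow> R \<in> REsharp den \<Longrightarrow> Concat (NegLookBehind E) R \<in> REsharp den"
| la: "E \<in> REc den \<Longrightarrow> R \<in> REsharp den \<Longrightarrow> Concat R (LookAhead E) \<in> REsharp den"
| nla: "E \<in> REc den \<Longrightarrow> R \<in> REsharp den \<Longrightarrow> Concat R (NegLookAhead E) \<in> REsharp den"

definition rx_equiv :: "('p \<Rightarrow> 'c set) \<Rightarrow> 'p rx \<Rightarrow> 'p rx \<Rightarrow> bool" where
  "rx_equiv den R S \<longleftrightarrow> (\<forall>s i j. matches den s R i j = matches den s S i j)"

end

theory Submission
  imports Defs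
begin

text \<open>With a predicate \<open>t\<close> denoting every character, \<open>Star (Pred t)\<close> matches every span, so a
  lookbehind \<open>(?<=E)\<close> at location \<open>i\<close> is the lookaround-free condition that the prefix up to
  \<open>i\<close> matches \<open>\<top>*E\<close>, and a lookahead \<open>(?=E)\<close> at \<open>j\<close> that the suffix from \<open>j\<close> matches \<open>E\<top>*\<close>;
  negative lookarounds give the complements. Hence every regex of RE# is matched exactly by the
  spans \<open>(i, j)\<close> with \<open>B\<close> on \<open>[0, i]\<close>, \<open>E\<close> on \<open>[i, j]\<close> and \<open>A\<close> on \<open>[j, |s|]\<close>, with \<open>A, B, E\<close>
  lookaround-free; this shape is preserved by intersection componentwise. Finally
  \<open>(?<=\A B)\<close> and \<open>(?=A \z)\<close> pin \<open>B\<close> and \<open>A\<close> to the whole prefix and suffix.\<close>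

lemma matches_span: "matches den s R i j \<Longrightarrow> i \<le> j \<and> j \<le> length s"
proof (induction R arbitrary: i j)
  case (Rep R m)
  then show ?case
    by (induction m arbitrary: i) fastforce+
next
  case (Star R)
  then obtain m where "pw (matches den s R) (length s) m i j" by auto
  then show ?case
    using Star.IH by (induction m arbitrary: i) fastforce+
next
  case (Concat R1 R2)
  then show ?case by (meson matches.simps(5) order_trans)
qed auto

lemma pw_Pred_top:
  "den t = UNIV \<Longrightarrow> pw (matches den s (Pred t)) (length s) n i j \<longleftrightarrow> j = i + n \<and> j \<le> length s"
  by (induction n arbitrary: i) auto

lemma matches_Star_top:
  "den t = UNIV \<Longrightarrow> matches den s (Star (Pred t)) i j \<longleftrightarrow> i \<le> j \<and> j \<le> length s"
  by (auto simp: pw_Pred_top le_iff_add)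

lemma matches_Concat_Star_top_from_start:
  "den t = UNIV \<Longrightarrow> matches den s (Concat (Star (Pred t)) E) 0 i \<longleftrightarrow> (\<exists>x\<le>i. matches den s E x i)"
  using matches_span[of den s E _ i]
  by (auto simp del: matches.simps(7) simp: matches_Star_top) (meson order_trans)

lemma matches_Concat_Star_top_to_end:
  "den t = UNIV \<Longrightarrow> matches den s (Concat E (Star (Pred t))) j (length s)
     \<longleftrightarrow> (\<exists>x. j \<le> x \<and> x \<le> length s \<and> matches den s E j x)"
  using matches_span[of den s E j] by (auto simp del: matches.simps(7) simp: matches_Star_top)

lemma matches_LookBehind_Concat:
  "matches den s (Concat (LookBehind E) R) i j \<longleftrightarrow> (\<exists>x\<le>i. matches den s E x i) \<and> matches den s R i j"
  using matches_span[of den s R i j] by auto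

lemma matches_NegLookBehind_Concat:
  "matches den s (Concat (NegLookBehind E) R) i j \<longleftrightarrow> \<not> (\<exists>x\<le>i. matches den s E x i) \<and> matches den s R i j"
  using matches_span[of den s R i j] by auto

lemma matches_Concat_LookAhead:
  "matches den s (Concat R (LookAhead E)) i j
     \<longleftrightarrow> (\<exists>x. j \<le> x \<and> x \<le> length s \<and> matches den s E j x) \<and> matches den s R i j"
  using matches_span[of den s R i j] by auto

lemma matches_Concat_NegLookAhead:
  "matches den s (Concat R (NegLookAhead E)) i j
     \<longleftrightarrow> \<not> (\<exists>x. j \<le> x \<and> x \<le> length s \<and> matches den s E j x) \<and> matches den s R i j"
  using matches_span[of den s R i j] by auto

definition anchored_form :: "('p \<Rightarrow> 'c set) \<Rightarrow> 'p rx \<Rightarrow> 'p rx \<Rightarrow> 'p rx \<Rightarrow> 'p rx \<Rightarrow> bool" where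
  "anchored_form den B E A R \<longleftrightarrow> (\<forall>s i j. matches den s R i j \<longleftrightarrow>
     matches den s B 0 i \<and> matches den s E i j \<and> matches den s A j (length s))"

lemma anchored_form_self:
  "den t = UNIV \<Longrightarrow> anchored_form den (Star (Pred t)) E (Star (Pred t)) E"
  unfolding anchored_form_def
  by (auto simp del: matches.simps(7) simp: matches_Star_top dest: matches_span)

lemma anchored_form_Inter:
  "anchored_form den B1 E1 A1 R1 \<Longrightarrow> anchored_form den B2 E2 A2 R2 \<Longrightarrow>
   anchored_form den (Inter B1 B2) (Inter E1 E2) (Inter A1 A2) (Inter R1 R2)"
  unfolding anchored_form_def by auto

lemma anchored_form_restrict_start:
  assumes "anchored_form den B E A R"
    and "\<And>s i. i \<le> length s \<Longrightarrow> matches den s C 0 i \<longleftrightarrow> P s i"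
    and "\<And>s i j. matches den s R' i j \<longleftrightarrow> P s i \<and> matches den s R i j"
  shows "anchored_form den (Inter B C) E A R'"
  unfolding anchored_form_def
proof (intro allI)
  fix s i j
  have "matches den s B 0 i \<Longrightarrow> i \<le> length s"
    using matches_span by blast
  then show "matches den s R' i j \<longleftrightarrow> matches den s (Inter B C) 0 i \<and> matches den s E i j
      \<and> matches den s A j (length s)"
    using assms unfolding anchored_form_def by auto
qed

lemma anchored_form_restrict_end:
  assumes "anchored_form den B E A R"
    and "\<And>s j. j \<le> length s \<Longrightarrow> matches den s C j (length s) \<longleftrightarrow> P s j"
    and "\<And>s i j. matches den s R' i j \<longleftrightarrow> P s j \<and> matches den s R i j"
  shows "anchored_form den B E (Inter A C) R'"
  unfolding anchored_form_def
proof (intro allI)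
  fix s i j
  have "matches den s A j (length s) \<Longrightarrow> j \<le> length s"
    using matches_span by blast
  then show "matches den s R' i j \<longleftrightarrow> matches den s B 0 i \<and> matches den s E i j
      \<and> matches den s (Inter A C) j (length s)"
    using assms unfolding anchored_form_def by auto
qed

lemma anchored_form_LookBehind:
  assumes "den t = UNIV" and "anchored_form den B E A R"
  shows "anchored_form den (Inter B (Concat (Star (Pred t)) E0)) E A (Concat (LookBehind E0) R)"
  by (rule anchored_form_restrict_start[OF assms(2)])
    (simp_all only: matches_Concat_Star_top_from_start[of den t, OF assms(1)] matches_LookBehind_Concat)

lemma anchored_form_NegLookBehind:
  assumes "den t = UNIV" and "anchored_form den B E A R"
  shows "anchored_form den (Inter B (Compl (Concat (Star (Pred t)) E0))) E A
    (Concat (NegLookBehind E0) R)"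
  by (rule anchored_form_restrict_start[OF assms(2)])
    (simp_all only: matches.simps(8) matches_Concat_Star_top_from_start[of den t, OF assms(1)]
      matches_NegLookBehind_Concat zero_le simp_thms)

lemma anchored_form_LookAhead:
  assumes "den t = UNIV" and "anchored_form den B E A R"
  shows "anchored_form den B E (Inter A (Concat E0 (Star (Pred t)))) (Concat R (LookAhead E0))"
  by (rule anchored_form_restrict_end[OF assms(2)])
    (simp_all only: matches_Concat_Star_top_to_end[of den t, OF assms(1)] matches_Concat_LookAhead)

lemma anchored_form_NegLookAhead:
  assumes "den t = UNIV" and "anchored_form den B E A R"
  shows "anchored_form den B E (Inter A (Compl (Concat E0 (Star (Pred t)))))
    (Concat R (NegLookAhead E0))"
  by (rule anchored_form_restrict_end[OF assms(2)])
    (simp_all only: matches.simps(8) matches_Concat_Star_top_to_end[of den t, OF assms(1)]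
      matches_Concat_NegLookAhead order_refl simp_thms)

lemma REc_Star_top: "Star (Pred t) \<in> REc den"
  by (intro REc.star REc.pred)

lemma anchored_form_exists:
  assumes top: "den t = UNIV" and "R \<in> REsharp den"
  shows "\<exists>A B E. A \<in> REc den \<and> B \<in> REc den \<and> E \<in> REc den \<and> anchored_form den B E A R"
  using \<open>R \<in> REsharp den\<close>
proof induction
  case (base E)
  have "anchored_form den (Star (Pred t)) E (Star (Pred t)) E"
    by (rule anchored_form_self[of den t, OF top])
  with base show ?case
    using REc_Star_top[of t den] by blast
next
  case (inter R1 R2)
  then obtain A1 B1 E1 A2 B2 E2 where
    "A1 \<in> REc den" "B1 \<in> REc den" "E1 \<in> REc den" "anchored_form den B1 E1 A1 R1"
    "A2 \<in> REc den" "B2 \<in> REc den" "E2 \<in> REc den" "anchored_form den B2 E2 A2 R2"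
    by blast
  then have "Inter A1 A2 \<in> REc den" "Inter B1 B2 \<in> REc den" "Inter E1 E2 \<in> REc den"
    "anchored_form den (Inter B1 B2) (Inter E1 E2) (Inter A1 A2) (Inter R1 R2)"
    by (simp_all add: REc.inter anchored_form_Inter)
  then show ?case
    by blast
next
  case (lb E0 R)
  then obtain A B E where "A \<in> REc den" "B \<in> REc den" "E \<in> REc den" "anchored_form den B E A R"
    by blast
  moreover have "Inter B (Concat (Star (Pred t)) E0) \<in> REc den"
    by (rule REc.inter[OF \<open>B \<in> REc den\<close> REc.concat[OF REc_Star_top lb.hyps(1)]])
  ultimately show ?case
    using anchored_form_LookBehind[of den t, OF top] by blast
next
  case (nlb E0 R)
  then obtain A B E where "A \<in> REc den" "B \<in> REc den" "E \<in> REc den" "anchored_form den B E A R"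
    by blast
  moreover have "Inter B (Compl (Concat (Star (Pred t)) E0)) \<in> REc den"
    by (rule REc.inter[OF \<open>B \<in> REc den\<close> REc.compl[OF REc.concat[OF REc_Star_top nlb.hyps(1)]]])
  ultimately show ?case
    using anchored_form_NegLookBehind[of den t, OF top] by blast
next
  case (la E0 R)
  then obtain A B E where "A \<in> REc den" "B \<in> REc den" "E \<in> REc den" "anchored_form den B E A R"
    by blast
  moreover have "Inter A (Concat E0 (Star (Pred t))) \<in> REc den"
    by (rule REc.inter[OF \<open>A \<in> REc den\<close> REc.concat[OF la.hyps(1) REc_Star_top]])
  ultimately show ?case
    using anchored_form_LookAhead[of den t, OF top] by blast
next
  case (nla E0 R)
  then obtain A B E where "A \<in> REc den" "B \<in> REc den" "E \<in> REc den" "anchored_form den B E A R"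
    by blast
  moreover have "Inter A (Compl (Concat E0 (Star (Pred t)))) \<in> REc den"
    by (rule REc.inter[OF \<open>A \<in> REc den\<close> REc.compl[OF REc.concat[OF nla.hyps(1) REc_Star_top]]])
  ultimately show ?case
    using anchored_form_NegLookAhead[of den t, OF top] by blast
qed

lemma matches_LookBehind_anchored:
  assumes "den t = UNIV"
  shows "matches den s (LookBehind (Concat (NegLookBehind (Pred t)) B)) i i'
    \<longleftrightarrow> i = i' \<and> i' \<le> length s \<and> matches den s B 0 i"
proof -
  have "(\<exists>x\<le>i. matches den s (Concat (NegLookBehind (Pred t)) B) x i) \<longleftrightarrow> matches den s B 0 i"
    using assms matches_span[of den s B] by (auto; metis not0_implies_Suc)
  then show ?thesis by auto
qed

lemma matches_LookAhead_anchored: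
  assumes "den t = UNIV"
  shows "matches den s (LookAhead (Concat A (NegLookAhead (Pred t)))) j j'
    \<longleftrightarrow> j = j' \<and> j' \<le> length s \<and> matches den s A j (length s)"
proof -
  have "(\<exists>x. j \<le> x \<and> x \<le> length s \<and> matches den s (Concat A (NegLookAhead (Pred t))) j x)
      \<longleftrightarrow> matches den s A j (length s)"
    using assms matches_span[of den s A j] by (auto simp: not_less_eq_eq) (metis le_antisym)
  then show ?thesis by auto
qed

lemma anchored_form_rx_equiv:
  assumes "den t = UNIV" and "anchored_form den B E A R"
  shows "rx_equiv den R (Concat (Concat (LookBehind (Concat (NegLookBehind (Pred t)) B)) E)
    (LookAhead (Concat A (NegLookAhead (Pred t)))))"
  using assms(2) matches_span[of den _ E]
  unfolding rx_equiv_def anchored_form_def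
  by (auto simp: matches_LookBehind_anchored[of den t, OF assms(1)]
      matches_LookAhead_anchored[of den t, OF assms(1)] simp del: matches.simps(9,11))
    (meson order_trans)

theorem theorem1:
  fixes den :: "'p \<Rightarrow> 'c set" and R :: "'p rx"
  assumes "bool_alg den"
    and "R \<in> REsharp den"
  shows "\<exists>A B E. A \<in> REc den \<and> B \<in> REc den \<and> E \<in> REc den \<and>
           rx_equiv den R (Concat (Concat (LookBehind B) E) (LookAhead A))"
proof -
  obtain t where top: "den t = UNIV"
    using \<open>bool_alg den\<close> unfolding bool_alg_def by (elim conjE) fast
  obtain A B E where "A \<in> REc den" "B \<in> REc den" "E \<in> REc den" "anchored_form den B E A R"
    using anchored_form_exists[of den t, OF top \<open>R \<in> REsharp den\<close>] by blast
  moreover have "Concat (NegLookBehind (Pred t)) B \<in> REc den"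
    by (rule REc.concat[OF REc.begA[of den t, OF top] \<open>B \<in> REc den\<close>])
  moreover have "Concat A (NegLookAhead (Pred t)) \<in> REc den"
    by (rule REc.concat[OF \<open>A \<in> REc den\<close> REc.endZ[of den t, OF top]])
  moreover have "rx_equiv den R (Concat (Concat (LookBehind (Concat (NegLookBehind (Pred t)) B)) E)
      (LookAhead (Concat A (NegLookAhead (Pred t)))))"
    by (rule anchored_form_rx_equiv[of den t, OF top \<open>anchored_form den B E A R\<close>])
  ultimately show ?thesis
    by blast
qed

end
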